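(* There exists a $(0)$-solvable knot $K$ (equivalently, a knot with Arf invariant $0$) with $\eta^{(2)}(M_K,\epsilon)=0$, i.e. zero abelian $L^2$-eta invariant, which is not algebraically torsion (no positive multiple $mK$ is algebraically slice).
   Context: $M_K$ is zero-framed surgery on $K$, $\epsilon\colon\pi_1(M_K)\to\mathbb{Z}$ the abelianization. For a closed 3-manifold $M$ and a homomorphism $\varphi\colon\pi_1(M)\to G$, $\eta^{(2)}(M,\varphi)\in\mathbb{R}$ is the Cheeger–Gromov (reduced) $L^2$-eta invariant; for knots one has $\eta^{(2)}(M_K,\epsilon)=\int_{S^1}\sigma_z(K)\,dz$ (normalized measure), where $\sigma_z(K)=\mathrm{sign}(A(1-z)+A^t(1-\bar z))$ for a Seifert matrix $A$. A knot is $(0)$-solvable if $M_K$ bounds a compact spin 4-manifold $W$ with $H_1(M_K)\to H_1(W)$ an isomorphism and $H_2(W)$ admitting two dual Lagrangians for the intersection form (submodules on which intersection and self-intersection forms vanish, paired nonsingularly with each other, whose images freely generate $H_2(W)$); this is equivalent to $\mathrm{Arf}(K)=0$, i.e. $\Delta_K(-1)\equiv\pm1\bmod 8$. Algebraically slice: having a Seifert matrix $\begin{pmatrix}0&B\\C&D\end{pmatrix}$ with equal-size square blocks; $mK$ is the $m$-fold connected sum. *)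

theory Defs
  imports "HOL-Analysis.Analysis" "Jordan_Normal_Form.Char_Poly"
begin

text \<open>Knots are represented through their Seifert matrices: integral square
matrices A with A - A^T unimodular (every such matrix is the Seifert matrix of
some knot, and two matrices come from the same knot-class data iff S-equivalent).\<close>

definition seifert_matrix :: "int mat \<Rightarrow> bool" where
  "seifert_matrix A \<longleftrightarrow> (\<exists>n. A \<in> carrier_mat n n \<and> \<bar>Determinant.det (A - transpose_mat A)\<bar> = 1)"

definition int_congruent :: "int mat \<Rightarrow> int mat \<Rightarrow> bool" where
  "int_congruent A B \<longleftrightarrow> (\<exists>n P. A \<in> carrier_mat n n \<and> P \<in> carrier_mat n n \<and>
      \<bar>Determinant.det P\<bar> = 1 \<and> B = P * A * transpose_mat P)"

text \<open>Elementary enlargements (Lickorish, Def. 8.3):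
  [[A, xi, 0],[0,0,0],[0,1,0]]  and  [[A,0,0],[xi^T,0,1],[0,0,0]].\<close>
definition enlarge1 :: "int mat \<Rightarrow> (nat \<Rightarrow> int) \<Rightarrow> int mat" where
  "enlarge1 A xi = (let n = dim_row A in mat (n+2) (n+2) (\<lambda>(i,j).
      if i < n \<and> j < n then A $$ (i,j)
      else if i < n \<and> j = n then xi i
      else if i = n+1 \<and> j = n then 1 else 0))"

definition enlarge2 :: "int mat \<Rightarrow> (nat \<Rightarrow> int) \<Rightarrow> int mat" where
  "enlarge2 A xi = (let n = dim_row A in mat (n+2) (n+2) (\<lambda>(i,j).
      if i < n \<and> j < n then A $$ (i,j)
      else if i = n \<and> j < n then xi j
      else if i = n \<and> j = n+1 then 1 else 0))"

inductive S_equiv :: "int mat \<Rightarrow> int mat \<Rightarrow> bool" where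
  refl: "S_equiv A A"
| congr: "int_congruent A B \<Longrightarrow> S_equiv A B"
| enl1: "A \<in> carrier_mat n n \<Longrightarrow> S_equiv A (enlarge1 A xi)"
| enl2: "A \<in> carrier_mat n n \<Longrightarrow> S_equiv A (enlarge2 A xi)"
| sym: "S_equiv A B \<Longrightarrow> S_equiv B A"
| trans: "S_equiv A B \<Longrightarrow> S_equiv B C \<Longrightarrow> S_equiv A C"

text \<open>Block sum (Seifert matrix of a connected sum) and m-fold sum.\<close>
definition block_sum :: "int mat \<Rightarrow> int mat \<Rightarrow> int mat" where
  "block_sum A B = four_block_mat A (0\<^sub>m (dim_row A) (dim_col B)) (0\<^sub>m (dim_row B) (dim_col A)) B"

fun mfold_sum :: "nat \<Rightarrow> int mat \<Rightarrow> int mat" where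
  "mfold_sum 0 A = 0\<^sub>m 0 0"
| "mfold_sum (Suc m) A = block_sum A (mfold_sum m A)"

definition metabolic_form :: "int mat \<Rightarrow> bool" where
  "metabolic_form M \<longleftrightarrow> (\<exists>g B C D. B \<in> carrier_mat g g \<and> C \<in> carrier_mat g g \<and>
      D \<in> carrier_mat g g \<and> M = four_block_mat (0\<^sub>m g g) B C D)"

text \<open>A knot with Seifert matrix A is algebraically slice iff it has a Seifert matrix
(i.e. a matrix S-equivalent to A) of metabolic shape.\<close>
definition alg_slice :: "int mat \<Rightarrow> bool" where
  "alg_slice A \<longleftrightarrow> (\<exists>M. S_equiv A M \<and> metabolic_form M)"

definition alg_torsion :: "int mat \<Rightarrow> bool" where
  "alg_torsion A \<longleftrightarrow> (\<exists>m>0. alg_slice (mfold_sum m A))"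

definition herm_signature :: "complex mat \<Rightarrow> int" where
  "herm_signature H =
     int (\<Sum>x\<in>{x. poly (char_poly H) x = 0 \<and> Im x = 0 \<and> Re x > 0}. order x (char_poly H))
   - int (\<Sum>x\<in>{x. poly (char_poly H) x = 0 \<and> Im x = 0 \<and> Re x < 0}. order x (char_poly H))"

definition lt_signature :: "int mat \<Rightarrow> complex \<Rightarrow> int" where
  "lt_signature A z = herm_signature
     ((1 - z) \<cdot>\<^sub>m map_mat of_int A + (1 - cnj z) \<cdot>\<^sub>m map_mat of_int (transpose_mat A))"

text \<open>Abelian L2-eta invariant eta^(2)(M_K, epsilon) = integral of sigma_z over S^1
with normalized measure.\<close>
definition abelian_eta :: "int mat \<Rightarrow> real" where
  "abelian_eta A = (1 / (2 * pi)) * integral {0..2*pi} (\<lambda>t. real_of_int (lt_signature A (cis t)))"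

text \<open>Arf invariant zero (equivalently (0)-solvable): Delta_K(-1) = det(A + A^T) = +-1 mod 8.\<close>
definition arf_zero :: "int mat \<Rightarrow> bool" where
  "arf_zero A \<longleftrightarrow> Determinant.det (A + transpose_mat A) mod 8 \<in> {1, 7}"

end

(*
  The knot is K = 6 K(1,1) # 4 K(-1,-2) # K(-1,-16), where K(a,c) is the genus one knot with
  Seifert matrix [[a, 1], [0, c]].  Its Arf invariant vanishes because
  det (A + A^T) = 3^6 * 7^4 * 63 = 7 mod 8.

  For ac > 0 the Levine-Tristram signature of K(a,c) at e^(it) is 2 sgn a on the arc where
  ac |1 - e^(it)|^2 > 1, i.e. cos t < 1 - 1/(2ac), and 0 elsewhere.  So the abelian eta
  invariant is a signed sum of arc lengths, and these cancel because
  arccos (31/32) = pi - 4 arccos (3/4).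

  K is not algebraically torsion: the symmetrised Seifert form of mK is positive definite on a
  subspace of dimension 12m, more than half of its size 22m.  This property survives congruence
  and elementary enlargements (an enlargement adds a hyperbolic plane, raising the positive index
  by exactly one), hence S-equivalence; but a metabolic matrix of size 2g has an isotropic
  subspace of dimension g, which meets every positive definite subspace trivially.
*)
theory Submission
  imports Defs
begin

section \<open>Real quadratic forms of integer matrices\<close>

text \<open>Real vectors are functions nat \<Rightarrow> real; an n \<times> n matrix only sees their first n
  coordinates.\<close>
definition bilin :: "int mat \<Rightarrow> nat \<Rightarrow> (nat \<Rightarrow> real) \<Rightarrow> (nat \<Rightarrow> real) \<Rightarrow> real" where
  "bilin A n x y = (\<Sum>i<n. \<Sum>j<n. of_int (A $$ (i,j)) * x i * y j)"

abbreviation quad_form :: "int mat \<Rightarrow> nat \<Rightarrow> (nat \<Rightarrow> real) \<Rightarrow> real" where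
  "quad_form A n x \<equiv> bilin A n x x"

definition mat_vec :: "int mat \<Rightarrow> nat \<Rightarrow> (nat \<Rightarrow> real) \<Rightarrow> nat \<Rightarrow> real" where
  "mat_vec M n y = (\<lambda>i. \<Sum>j<n. of_int (M $$ (i,j)) * y j)"

definition lincomb :: "(nat \<Rightarrow> nat \<Rightarrow> real) \<Rightarrow> nat set \<Rightarrow> (nat \<Rightarrow> real) \<Rightarrow> nat \<Rightarrow> real" where
  "lincomb v J c = (\<lambda>i. \<Sum>j\<in>J. c j * v j i)"

lemma bilin_cong:
  "(\<And>i. i < n \<Longrightarrow> x i = x' i) \<Longrightarrow> (\<And>i. i < n \<Longrightarrow> y i = y' i) \<Longrightarrow> bilin A n x y = bilin A n x' y'"
  unfolding bilin_def by (intro sum.cong HOL.refl) auto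

lemma bilin_eq_sum_mat_vec: "bilin A n x y = (\<Sum>i<n. x i * mat_vec A n y i)"
  unfolding bilin_def mat_vec_def by (simp add: sum_distrib_left algebra_simps)

lemma mat_vec_mult:
  assumes "X \<in> carrier_mat n n" "Y \<in> carrier_mat n n" "i < n"
  shows "mat_vec (X * Y) n y i = mat_vec X n (mat_vec Y n y) i"
proof -
  have "mat_vec (X * Y) n y i = (\<Sum>j<n. (\<Sum>k<n. of_int (X $$ (i,k)) * of_int (Y $$ (k,j))) * y j)"
    unfolding mat_vec_def
  proof (rule sum.cong[OF HOL.refl])
    fix j assume "j \<in> {..<n}"
    then have "(X * Y) $$ (i,j) = (\<Sum>k<n. X $$ (i,k) * Y $$ (k,j))"
      using assms by (simp add: index_mult_mat scalar_prod_def atLeast0LessThan)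
    then show "of_int ((X * Y) $$ (i, j)) * y j = (\<Sum>k<n. of_int (X $$ (i,k)) * of_int (Y $$ (k,j))) * y j"
      by (simp only: of_int_sum of_int_mult)
  qed
  also have "\<dots> = (\<Sum>j<n. \<Sum>k<n. of_int (X $$ (i,k)) * of_int (Y $$ (k,j)) * y j)"
    by (simp only: sum_distrib_right)
  also have "\<dots> = (\<Sum>k<n. \<Sum>j<n. of_int (X $$ (i,k)) * of_int (Y $$ (k,j)) * y j)"
    by (rule sum.swap)
  also have "\<dots> = mat_vec X n (mat_vec Y n y) i"
    unfolding mat_vec_def by (simp add: sum_distrib_left mult.assoc)
  finally show ?thesis .
qed

lemma sum_mat_vec_transpose:
  assumes "X \<in> carrier_mat n n"
  shows "(\<Sum>i<n. x i * mat_vec X n w i) = (\<Sum>j<n. mat_vec (transpose_mat X) n x j * w j)"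
proof -
  have "(\<Sum>i<n. x i * mat_vec X n w i) = (\<Sum>i<n. \<Sum>j<n. x i * of_int (X $$ (i,j)) * w j)"
    unfolding mat_vec_def by (simp add: sum_distrib_left algebra_simps)
  also have "\<dots> = (\<Sum>j<n. \<Sum>i<n. x i * of_int (X $$ (i,j)) * w j)"
    by (rule sum.swap)
  also have "\<dots> = (\<Sum>j<n. mat_vec (transpose_mat X) n x j * w j)"
    unfolding mat_vec_def using assms
    by (simp add: sum_distrib_right sum_distrib_left mult.commute mult.left_commute)
  finally show ?thesis .
qed

lemma bilin_congruence:
  assumes A: "A \<in> carrier_mat n n" and P: "P \<in> carrier_mat n n"
  shows "bilin (P * A * transpose_mat P) n x y
    = bilin A n (mat_vec (transpose_mat P) n x) (mat_vec (transpose_mat P) n y)"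
proof -
  have PT: "transpose_mat P \<in> carrier_mat n n" and PA: "P * A \<in> carrier_mat n n" using P A by auto
  have "bilin (P * A * transpose_mat P) n x y
      = (\<Sum>i<n. x i * mat_vec P n (mat_vec A n (mat_vec (transpose_mat P) n y)) i)"
    unfolding bilin_eq_sum_mat_vec
  proof (rule sum.cong[OF HOL.refl])
    fix i assume "i \<in> {..<n}"
    then have i: "i < n" by simp
    show "x i * mat_vec (P * A * transpose_mat P) n y i
        = x i * mat_vec P n (mat_vec A n (mat_vec (transpose_mat P) n y)) i"
      using mat_vec_mult[OF PA PT i] mat_vec_mult[OF P A i] by simp
  qed
  also have "\<dots> = bilin A n (mat_vec (transpose_mat P) n x) (mat_vec (transpose_mat P) n y)"
    unfolding sum_mat_vec_transpose[OF P] bilin_eq_sum_mat_vec ..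
  finally show ?thesis .
qed

lemma mat_vec_lincomb: "mat_vec M n (lincomb v J c) = lincomb (\<lambda>j. mat_vec M n (v j)) J c"
proof
  fix i
  have "lincomb (\<lambda>j. mat_vec M n (v j)) J c i = (\<Sum>j\<in>J. \<Sum>k<n. c j * (of_int (M $$ (i,k)) * v j k))"
    unfolding lincomb_def mat_vec_def by (simp add: sum_distrib_left)
  also have "\<dots> = (\<Sum>k<n. \<Sum>j\<in>J. c j * (of_int (M $$ (i,k)) * v j k))"
    by (rule sum.swap)
  also have "\<dots> = mat_vec M n (lincomb v J c) i"
    unfolding lincomb_def mat_vec_def by (simp add: sum_distrib_left algebra_simps)
  finally show "mat_vec M n (lincomb v J c) i = lincomb (\<lambda>j. mat_vec M n (v j)) J c i" ..
qed

lemma bilin_lincomb_left: "bilin A n (lincomb v J c) y = (\<Sum>j\<in>J. c j * bilin A n (v j) y)"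
proof -
  have "bilin A n (lincomb v J c) y = (\<Sum>i<n. \<Sum>j\<in>J. c j * (v j i * mat_vec A n y i))"
    unfolding bilin_eq_sum_mat_vec lincomb_def by (simp add: sum_distrib_right mult.assoc)
  also have "\<dots> = (\<Sum>j\<in>J. \<Sum>i<n. c j * (v j i * mat_vec A n y i))"
    by (rule sum.swap)
  also have "\<dots> = (\<Sum>j\<in>J. c j * bilin A n (v j) y)"
    unfolding bilin_eq_sum_mat_vec by (simp add: sum_distrib_left)
  finally show ?thesis .
qed

lemma bilin_lincomb_right: "bilin A n x (lincomb v J c) = (\<Sum>j\<in>J. c j * bilin A n x (v j))"
proof -
  have "bilin A n x (lincomb v J c) = (\<Sum>i<n. x i * (\<Sum>j\<in>J. c j * mat_vec A n (v j) i))"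
    unfolding bilin_eq_sum_mat_vec mat_vec_lincomb unfolding lincomb_def ..
  also have "\<dots> = (\<Sum>i<n. \<Sum>j\<in>J. c j * (x i * mat_vec A n (v j) i))"
    by (simp add: sum_distrib_left mult.left_commute)
  also have "\<dots> = (\<Sum>j\<in>J. \<Sum>i<n. c j * (x i * mat_vec A n (v j) i))"
    by (rule sum.swap)
  also have "\<dots> = (\<Sum>j\<in>J. c j * bilin A n x (v j))"
    unfolding bilin_eq_sum_mat_vec by (simp add: sum_distrib_left)
  finally show ?thesis .
qed

lemma quad_form_add_smult:
  "quad_form A n (\<lambda>i. x i + s * y i) = quad_form A n x + s * (bilin A n x y + bilin A n y x) + s\<^sup>2 * quad_form A n y"
  unfolding bilin_def by (simp add: algebra_simps sum.distrib sum_distrib_left power2_eq_square)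

lemma lincomb_zero: "(\<forall>j\<in>J. c j = 0) \<Longrightarrow> lincomb v J c = (\<lambda>i. 0)"
  unfolding lincomb_def by simp

lemma bilin_zero_left [simp]: "bilin A n (\<lambda>i. 0) y = 0"
  unfolding bilin_def by simp

lemma sum_lessThan_add: "(\<Sum>i<m + (n::nat). f i) = (\<Sum>i<m. f i) + (\<Sum>i<n. f (m + i))"
  by (induction n) (auto simp: add.commute add.left_commute)

lemma bilin_block_sum:
  assumes A1: "A1 \<in> carrier_mat n1 n1" and A2: "A2 \<in> carrier_mat n2 n2"
  shows "bilin (block_sum A1 A2) (n1 + n2) x y
    = bilin A1 n1 x y + bilin A2 n2 (\<lambda>i. x (n1 + i)) (\<lambda>i. y (n1 + i))"
proof -
  let ?B = "block_sum A1 A2"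
  have "?B $$ (i, j) = A1 $$ (i, j)" if "i < n1" "j < n1" for i j
    using that A1 A2 unfolding block_sum_def by simp
  moreover have "?B $$ (i, n1 + j) = 0" if "i < n1" "j < n2" for i j
    using that A1 A2 unfolding block_sum_def by simp
  moreover have "?B $$ (n1 + i, j) = 0" if "i < n2" "j < n1" for i j
    using that A1 A2 unfolding block_sum_def by simp
  moreover have "?B $$ (n1 + i, n1 + j) = A2 $$ (i, j)" if "i < n2" "j < n2" for i j
    using that A1 A2 unfolding block_sum_def by simp
  ultimately show ?thesis
    unfolding bilin_def sum_lessThan_add by (simp add: sum.distrib)
qed

section \<open>Positive index of inertia\<close>

lemma homogeneous_system_nontrivial_solution:
  fixes M :: "nat \<Rightarrow> nat \<Rightarrow> real"
  assumes "finite I" "finite J" "card I < card J"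
  shows "\<exists>c. (\<exists>j\<in>J. c j \<noteq> 0) \<and> (\<forall>i\<in>I. (\<Sum>j\<in>J. M i j * c j) = 0)"
  using assms
proof (induction I arbitrary: J M rule: finite_induct)
  case empty
  then have "J \<noteq> {}" by auto
  then show ?case by (intro exI[of _ "\<lambda>_. 1"]) auto
next
  case (insert i0 I)
  show ?case
  proof (cases "\<forall>j\<in>J. M i0 j = 0")
    case True
    with insert show ?thesis by auto
  next
    case False
    then obtain j0 where j0: "j0 \<in> J" "M i0 j0 \<noteq> 0" by auto
    define J' where "J' = J - {j0}"
    define M' where "M' i j = M i j - M i j0 * M i0 j / M i0 j0" for i j
    have J': "finite J'" "card I < card J'" using j0 insert unfolding J'_def by auto
    from insert.IH[OF J'] obtain c' where
      c': "\<exists>j\<in>J'. c' j \<noteq> 0" "\<forall>i\<in>I. (\<Sum>j\<in>J'. M' i j * c' j) = 0" by blast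
    define c where "c = c'(j0 := - (\<Sum>j\<in>J'. M i0 j * c' j) / M i0 j0)"
    have c_j0: "c j0 = - (\<Sum>j\<in>J'. M i0 j * c' j) / M i0 j0" by (simp add: c_def)
    have sum_J: "(\<Sum>j\<in>J. M i j * c j) = M i j0 * c j0 + (\<Sum>j\<in>J'. M i j * c' j)" for i
    proof -
      have "(\<Sum>j\<in>J'. M i j * c j) = (\<Sum>j\<in>J'. M i j * c' j)"
        unfolding J'_def c_def by (intro sum.cong) auto
      then show ?thesis unfolding J'_def using j0 insert.prems by (simp add: sum.remove)
    qed
    have "(\<Sum>j\<in>J. M i j * c j) = 0" if "i \<in> insert i0 I" for i
    proof (cases "i = i0")
      case False
      then have "(\<Sum>j\<in>J'. M' i j * c' j) = 0" using c'(2) that by auto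
      then have "(\<Sum>j\<in>J'. M i j * c' j) = M i j0 / M i0 j0 * (\<Sum>j\<in>J'. M i0 j * c' j)"
        unfolding M'_def by (simp add: sum_subtractf sum_distrib_left algebra_simps)
      then show ?thesis using j0 by (simp add: sum_J c_j0)
    qed (use j0 in \<open>simp add: sum_J c_j0\<close>)
    moreover have "\<exists>j\<in>J. c j \<noteq> 0" using c' unfolding c_def J'_def by auto
    ultimately show ?thesis by blast
  qed
qed

text \<open>Positive index of inertia at least k; the k vectors are necessarily linearly independent.\<close>
definition pos_index_ge :: "((nat \<Rightarrow> real) \<Rightarrow> real) \<Rightarrow> nat \<Rightarrow> bool" where
  "pos_index_ge q k \<longleftrightarrow> (\<exists>v J. finite J \<and> card J = k \<and>
      (\<forall>c. (\<exists>j\<in>J. c j \<noteq> 0) \<longrightarrow> q (lincomb v J c) > 0))"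

lemma pos_index_ge_0 [simp]: "pos_index_ge q 0"
  unfolding pos_index_ge_def by (intro exI[of _ "\<lambda>j i. 0"] exI[of _ "{}"]) auto

lemma pos_index_ge_linear_image:
  assumes T: "\<And>v J c. T (lincomb v J c) = lincomb (\<lambda>j. T (v j)) J c"
    and "pos_index_ge (\<lambda>x. q (T x)) k"
  shows "pos_index_ge q k"
proof -
  from assms(2) obtain v J where J: "finite J" "card J = k"
    and pos: "\<And>c. (\<exists>j\<in>J. c j \<noteq> 0) \<Longrightarrow> q (T (lincomb v J c)) > 0"
    unfolding pos_index_ge_def by blast
  show ?thesis unfolding pos_index_ge_def
    using J pos unfolding T by (intro exI[of _ "\<lambda>j. T (v j)"] exI[of _ J]) auto
qed

lemma pos_index_ge_congruence:
  assumes "A \<in> carrier_mat n n" "P \<in> carrier_mat n n"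
    and "pos_index_ge (quad_form (P * A * transpose_mat P) n) k"
  shows "pos_index_ge (quad_form A n) k"
proof -
  have "pos_index_ge (\<lambda>x. quad_form A n (mat_vec (transpose_mat P) n x)) k"
    using assms(3) by (simp add: bilin_congruence[OF assms(1,2)])
  then show ?thesis by (rule pos_index_ge_linear_image[OF mat_vec_lincomb])
qed

lemma pos_index_ge_block_sum:
  assumes A1: "A1 \<in> carrier_mat n1 n1" and A2: "A2 \<in> carrier_mat n2 n2"
    and "pos_index_ge (quad_form A1 n1) k1" and "pos_index_ge (quad_form A2 n2) k2"
  shows "pos_index_ge (quad_form (block_sum A1 A2) (n1 + n2)) (k1 + k2)"
proof -
  from assms(3) obtain v1 J1 where J1: "finite J1" "card J1 = k1"
    and pos1: "\<And>c. (\<exists>j\<in>J1. c j \<noteq> 0) \<Longrightarrow> quad_form A1 n1 (lincomb v1 J1 c) > 0"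
    unfolding pos_index_ge_def by blast
  from assms(4) obtain v2 J2 where J2: "finite J2" "card J2 = k2"
    and pos2: "\<And>c. (\<exists>j\<in>J2. c j \<noteq> 0) \<Longrightarrow> quad_form A2 n2 (lincomb v2 J2 c) > 0"
    unfolding pos_index_ge_def by blast
  have nonneg1: "quad_form A1 n1 (lincomb v1 J1 c) \<ge> 0" for c
    using pos1[of c] lincomb_zero[of J1 c v1] by (cases "\<exists>j\<in>J1. c j \<noteq> 0") auto
  have nonneg2: "quad_form A2 n2 (lincomb v2 J2 c) \<ge> 0" for c
    using pos2[of c] lincomb_zero[of J2 c v2] by (cases "\<exists>j\<in>J2. c j \<noteq> 0") auto
  define ev od :: "nat \<Rightarrow> nat" where "ev j = 2 * j" and "od j = 2 * j + 1" for j
  define J where "J = ev ` J1 \<union> od ` J2"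
  define v where "v j i = (if even j then (if i < n1 then v1 (j div 2) i else 0)
                           else (if n1 \<le> i then v2 (j div 2) (i - n1) else 0))" for j i
  have inj: "inj ev" "inj od" unfolding ev_def od_def inj_def by auto
  have disj: "ev ` J1 \<inter> od ` J2 = {}" unfolding ev_def od_def by auto presburger
  have sum_J: "(\<Sum>j\<in>J. f j) = (\<Sum>j\<in>J1. f (ev j)) + (\<Sum>j\<in>J2. f (od j))" for f :: "nat \<Rightarrow> real"
    unfolding J_def using J1 J2 disj
    by (simp add: sum.union_disjoint sum.reindex inj_on_subset[OF inj(1)] inj_on_subset[OF inj(2)])
  have comb1: "lincomb v J c i = lincomb v1 J1 (\<lambda>j. c (ev j)) i" if "i < n1" for c i
    using that unfolding lincomb_def sum_J v_def ev_def od_def by simp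
  have comb2: "lincomb v J c (n1 + i) = lincomb v2 J2 (\<lambda>j. c (od j)) i" for c i
    unfolding lincomb_def sum_J v_def ev_def od_def by simp
  show ?thesis unfolding pos_index_ge_def
  proof (intro exI[of _ v] exI[of _ J] conjI allI impI)
    show "finite J" using J1 J2 unfolding J_def by auto
    show "card J = k1 + k2" unfolding J_def
      using J1 J2 disj inj by (simp add: card_Un_disjoint card_image inj_on_subset)
    fix c :: "nat \<Rightarrow> real" assume "\<exists>j\<in>J. c j \<noteq> 0"
    then have "(\<exists>j\<in>J1. c (ev j) \<noteq> 0) \<or> (\<exists>j\<in>J2. c (od j) \<noteq> 0)" unfolding J_def by auto
    moreover have "quad_form (block_sum A1 A2) (n1 + n2) (lincomb v J c)
       = quad_form A1 n1 (lincomb v1 J1 (\<lambda>j. c (ev j))) + quad_form A2 n2 (lincomb v2 J2 (\<lambda>j. c (od j)))"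
      unfolding bilin_block_sum[OF A1 A2]
      by (intro arg_cong2[where f="(+)"] bilin_cong) (auto simp: comb1 comb2)
    ultimately show "quad_form (block_sum A1 A2) (n1 + n2) (lincomb v J c) > 0"
      using pos1 pos2 nonneg1 nonneg2 by (smt (verit))
  qed
qed

lemma pos_index_ge_positive_definite:
  assumes "\<And>x. (\<exists>i<n. x i \<noteq> 0) \<Longrightarrow> quad_form A n x > 0"
  shows "pos_index_ge (quad_form A n) n"
proof -
  define v :: "nat \<Rightarrow> nat \<Rightarrow> real" where "v j i = (if i = j then 1 else 0)" for j i
  have comb: "lincomb v {..<n} c i = (if i < n then c i else 0)" for c i
    unfolding lincomb_def v_def by (simp add: if_distrib cong: if_cong)
  show ?thesis unfolding pos_index_ge_def
  proof (intro exI[of _ v] exI[of _ "{..<n}"] conjI allI impI)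
    fix c :: "nat \<Rightarrow> real" assume "\<exists>j\<in>{..<n}. c j \<noteq> 0"
    then have "\<exists>i<n. lincomb v {..<n} c i \<noteq> 0" by (auto simp: comb)
    then show "quad_form A n (lincomb v {..<n} c) > 0" by (rule assms)
  qed simp_all
qed

text \<open>Elimination of coordinate m with the pivot v j0.  If all v j vanish at m, the pivot
  is 0 and, as x / 0 = 0, nothing changes.\<close>
lemma lincomb_pivot:
  fixes v :: "nat \<Rightarrow> nat \<Rightarrow> real" and c :: "nat \<Rightarrow> real"
  assumes J: "finite J" "j0 \<in> J" and pivot: "v j0 m = 0 \<longrightarrow> (\<forall>j\<in>J. v j m = 0)"
  defines "c0 \<equiv> c(j0 := - (\<Sum>j\<in>J - {j0}. c j * v j m) / v j0 m)"
  shows "lincomb v J c0 = lincomb (\<lambda>j i. v j i - v j m / v j0 m * v j0 i) (J - {j0}) c"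
    and "lincomb v J c0 m = 0"
proof -
  have c0_j0: "c0 j0 = - (\<Sum>j\<in>J - {j0}. c j * v j m) / v j0 m" unfolding c0_def by simp
  have comb: "lincomb v J c0 i = c0 j0 * v j0 i + (\<Sum>j\<in>J - {j0}. c j * v j i)" for i
  proof -
    have "(\<Sum>j\<in>J - {j0}. c0 j * v j i) = (\<Sum>j\<in>J - {j0}. c j * v j i)"
      unfolding c0_def by (intro sum.cong) auto
    then show ?thesis unfolding lincomb_def using J by (simp add: sum.remove)
  qed
  show "lincomb v J c0 = lincomb (\<lambda>j i. v j i - v j m / v j0 m * v j0 i) (J - {j0}) c"
  proof
    fix i
    have "lincomb (\<lambda>j i. v j i - v j m / v j0 m * v j0 i) (J - {j0}) c i
        = (\<Sum>j\<in>J - {j0}. c j * v j i) - (\<Sum>j\<in>J - {j0}. c j * v j m / v j0 m * v j0 i)"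
      unfolding lincomb_def by (simp add: right_diff_distrib sum_subtractf mult.assoc)
    also have "(\<Sum>j\<in>J - {j0}. c j * v j m / v j0 m * v j0 i) = (\<Sum>j\<in>J - {j0}. c j * v j m) / v j0 m * v j0 i"
      by (simp only: sum_divide_distrib sum_distrib_right)
    finally show "lincomb v J c0 i = lincomb (\<lambda>j i. v j i - v j m / v j0 m * v j0 i) (J - {j0}) c i"
      unfolding comb c0_j0 by simp
  qed
  show "lincomb v J c0 m = 0"
  proof (cases "v j0 m = 0")
    case True
    then show ?thesis using pivot unfolding comb by simp
  qed (simp add: comb c0_j0)
qed

lemma pos_index_ge_hyperplane:
  assumes "pos_index_ge q (Suc k)" and q': "\<And>x. x m = 0 \<Longrightarrow> q' x = q x"
  shows "pos_index_ge q' k"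
proof -
  from assms(1) obtain v J where J: "finite J" "card J = Suc k"
    and pos: "\<And>c. (\<exists>j\<in>J. c j \<noteq> 0) \<Longrightarrow> q (lincomb v J c) > 0"
    unfolding pos_index_ge_def by blast
  obtain j0 where j0: "j0 \<in> J" and pivot: "v j0 m = 0 \<longrightarrow> (\<forall>j\<in>J. v j m = 0)"
  proof (cases "\<exists>j\<in>J. v j m \<noteq> 0")
    case False
    moreover have "J \<noteq> {}" using J by auto
    then obtain j where "j \<in> J" by blast
    ultimately show ?thesis using that by blast
  qed (use that in blast)
  define v' where "v' = (\<lambda>j i. v j i - v j m / v j0 m * v j0 i)"
  show ?thesis unfolding pos_index_ge_def
  proof (intro exI[of _ v'] exI[of _ "J - {j0}"] conjI allI impI)
    show "finite (J - {j0})" "card (J - {j0}) = k" using J j0 by auto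
    fix c :: "nat \<Rightarrow> real" assume "\<exists>j\<in>J - {j0}. c j \<noteq> 0"
    define c0 where "c0 = c(j0 := - (\<Sum>j\<in>J - {j0}. c j * v j m) / v j0 m)"
    note comb = lincomb_pivot[of J j0 v m c, OF J(1) j0 pivot, folded c0_def v'_def]
    have "\<exists>j\<in>J. c0 j \<noteq> 0" using \<open>\<exists>j\<in>J - {j0}. c j \<noteq> 0\<close> unfolding c0_def by auto
    then have "q (lincomb v J c0) > 0" by (rule pos)
    moreover have "q' (lincomb v' (J - {j0}) c) = q (lincomb v' (J - {j0}) c)"
      using comb by (intro q') simp
    ultimately show "q' (lincomb v' (J - {j0}) c) > 0" using comb(1) by simp
  qed
qed

lemma pos_definite_represents_functional:
  assumes J: "finite J"
    and pos: "\<And>c. (\<exists>j\<in>J. c j \<noteq> 0) \<Longrightarrow> quad_form A n (lincomb v J c) > 0"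
  shows "\<exists>y. \<forall>j\<in>J. bilin A n (v j) y + bilin A n y (v j) = f j"
proof -
  define sb where "sb x y = bilin A n x y + bilin A n y x" for x y
  have sb_lincomb: "sb x (lincomb v J a) = (\<Sum>l\<in>J. a l * sb x (v l))" for x a
    unfolding sb_def bilin_lincomb_left bilin_lincomb_right by (simp add: sum.distrib algebra_simps)
  obtain e :: nat where e: "e \<notin> J" using ex_new_if_finite[OF infinite_UNIV_nat J] by auto
  define M where "M j l = (if l = e then - f j else sb (v j) (v l))" for j l
  have "finite (insert e J)" "card J < card (insert e J)" using e J by simp_all
  then obtain c where c: "\<exists>l\<in>insert e J. c l \<noteq> 0" "\<forall>j\<in>J. (\<Sum>l\<in>insert e J. M j l * c l) = 0"
    using homogeneous_system_nontrivial_solution[OF J, of "insert e J" M] by blast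
  have solves: "(\<Sum>l\<in>J. c l * sb (v j) (v l)) = f j * c e" if "j \<in> J" for j
  proof -
    have "(\<Sum>l\<in>J. M j l * c l) = (\<Sum>l\<in>J. c l * sb (v j) (v l))"
      unfolding M_def using e by (intro sum.cong) auto
    moreover have "M j e * c e + (\<Sum>l\<in>J. M j l * c l) = 0" using c(2) that e J by simp
    ultimately show ?thesis unfolding M_def by simp
  qed
  have "c e \<noteq> 0"
  proof
    assume ce: "c e = 0"
    then have "\<exists>l\<in>J. c l \<noteq> 0" using c(1) by auto
    then have "quad_form A n (lincomb v J c) > 0" by (rule pos)
    moreover have "sb (lincomb v J c) (v l) = 0" if "l \<in> J" for l
    proof -
      have "sb (lincomb v J c) (v l) = sb (v l) (lincomb v J c)" unfolding sb_def by simp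
      then show ?thesis using solves[OF that] ce by (simp add: sb_lincomb)
    qed
    then have "sb (lincomb v J c) (lincomb v J c) = 0"
      unfolding sb_lincomb by (intro sum.neutral) simp
    ultimately show False unfolding sb_def by simp
  qed
  show ?thesis
  proof (intro exI[of _ "lincomb v J (\<lambda>l. c l / c e)"] ballI)
    fix j assume "j \<in> J"
    have "sb (v j) (lincomb v J (\<lambda>l. c l / c e)) = (\<Sum>l\<in>J. c l * sb (v j) (v l)) / c e"
      unfolding sb_lincomb by (simp add: sum_divide_distrib)
    also have "\<dots> = f j" using solves[OF \<open>j \<in> J\<close>] \<open>c e \<noteq> 0\<close> by simp
    finally show "bilin A n (v j) (lincomb v J (\<lambda>l. c l / c e))
        + bilin A n (lincomb v J (\<lambda>l. c l / c e)) (v j) = f j" unfolding sb_def .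
  qed
qed

lemma symmetrised_bilin_lincomb:
  assumes "\<And>j. j \<in> J \<Longrightarrow> bilin A n (v j) y + bilin A n y (v j) = - (\<Sum>i<n. w i * v j i)"
  shows "bilin A n (lincomb v J a) y + bilin A n y (lincomb v J a) = - (\<Sum>i<n. w i * lincomb v J a i)"
proof -
  have "bilin A n (lincomb v J a) y + bilin A n y (lincomb v J a)
      = (\<Sum>j\<in>J. a j * (bilin A n (v j) y + bilin A n y (v j)))"
    unfolding bilin_lincomb_left bilin_lincomb_right by (simp add: sum.distrib distrib_left)
  also have "\<dots> = (\<Sum>j\<in>J. \<Sum>i<n. - (w i * (a j * v j i)))"
    using assms by (intro sum.cong) (simp_all add: sum_distrib_left sum_negf mult_ac)
  also have "\<dots> = - (\<Sum>i<n. w i * lincomb v J a i)"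
    unfolding lincomb_def by (subst sum.swap) (simp add: sum_negf sum_distrib_left)
  finally show ?thesis .
qed

lemma quad_form_extension:
  fixes w :: "nat \<Rightarrow> real"
  assumes E: "\<And>x. quad_form E (n + 2) x = quad_form A n x + x n * (\<Sum>i<n. w i * x i) + x n * x (Suc n)"
    and xy: "bilin A n x y + bilin A n y x = - (\<Sum>i<n. w i * x i)"
  shows "quad_form E (n + 2) (\<lambda>i. if i < n then x i + s * y i else if i = n then s
            else s * (1 - quad_form A n y - (\<Sum>i<n. w i * y i))) = quad_form A n x + s\<^sup>2"
    (is "quad_form E (n + 2) ?X = _")
proof -
  have "quad_form A n ?X = quad_form A n (\<lambda>i. x i + s * y i)"
    by (rule bilin_cong) simp_all
  moreover have "(\<Sum>i<n. w i * ?X i) = (\<Sum>i<n. w i * x i + s * (w i * y i))"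
    by (rule sum.cong) (simp_all add: algebra_simps)
  ultimately show ?thesis
    using E[of ?X] xy
    by (simp add: quad_form_add_smult sum.distrib sum_distrib_left algebra_simps power2_eq_square)
qed

lemma pos_index_ge_enlargement:
  fixes w :: "nat \<Rightarrow> real"
  assumes E: "\<And>x. quad_form E (n + 2) x = quad_form A n x + x n * (\<Sum>i<n. w i * x i) + x n * x (Suc n)"
    and "pos_index_ge (quad_form A n) k"
  shows "pos_index_ge (quad_form E (n + 2)) (Suc k)"
proof -
  from assms(2) obtain v J where J: "finite J" "card J = k"
    and pos: "\<And>c. (\<exists>j\<in>J. c j \<noteq> 0) \<Longrightarrow> quad_form A n (lincomb v J c) > 0"
    unfolding pos_index_ge_def by blast
  have "\<exists>y. \<forall>j\<in>J. bilin A n (v j) y + bilin A n y (v j) = - (\<Sum>i<n. w i * v j i)"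
    by (rule pos_definite_represents_functional[OF J(1)]) (rule pos)
  then obtain y where y: "\<And>j. j \<in> J \<Longrightarrow> bilin A n (v j) y + bilin A n y (v j) = - (\<Sum>i<n. w i * v j i)"
    by blast
  obtain e :: nat where e: "e \<notin> J" using ex_new_if_finite[OF infinite_UNIV_nat J(1)] by auto
  text \<open>The new vector (y, 1, b) is orthogonal to the old ones for the symmetrised form,
    and b normalises its square to 1.\<close>
  define b where "b = 1 - quad_form A n y - (\<Sum>i<n. w i * y i)"
  define u where "u j i = (if j = e then (if i < n then y i else if i = n then 1 else b)
                           else if i < n then v j i else 0)" for j i
  show ?thesis unfolding pos_index_ge_def
  proof (intro exI[of _ u] exI[of _ "insert e J"] conjI allI impI)
    show "finite (insert e J)" "card (insert e J) = Suc k" using e J by auto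
    fix a :: "nat \<Rightarrow> real" assume a: "\<exists>j\<in>insert e J. a j \<noteq> 0"
    define x where "x = lincomb v J a"
    have "(\<Sum>j\<in>J. a j * u j i) = (\<Sum>j\<in>J. if i < n then a j * v j i else 0)" for i
      using e by (intro sum.cong) (auto simp: u_def)
    then have comb: "lincomb u (insert e J) a
        = (\<lambda>i. if i < n then x i + a e * y i else if i = n then a e else a e * b)"
      using e J(1) unfolding lincomb_def x_def by (auto simp: u_def)
    have sym: "bilin A n x y + bilin A n y x = - (\<Sum>i<n. w i * x i)"
      unfolding x_def using y by (rule symmetrised_bilin_lincomb)
    have "quad_form E (n + 2) (lincomb u (insert e J) a) = quad_form A n x + (a e)\<^sup>2"
      unfolding comb b_def by (rule quad_form_extension[OF E sym])
    moreover have "quad_form A n x > 0 \<or> (x = (\<lambda>i. 0) \<and> a e \<noteq> 0)"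
      using pos[of a] lincomb_zero[of J a v] a unfolding x_def by auto
    ultimately show "quad_form E (n + 2) (lincomb u (insert e J) a) > 0"
      by (auto simp: add_pos_nonneg)
  qed
qed

section \<open>An S-equivalence invariant\<close>

text \<open>For nonsingular A + A^T this says that the signature of A + A^T is positive.\<close>
definition large_pos_index :: "int mat \<Rightarrow> bool" where
  "large_pos_index A \<longleftrightarrow> (\<exists>k. dim_row A < 2 * k \<and> pos_index_ge (quad_form A (dim_row A)) k)"

lemma large_pos_index_enlargement_iff:
  fixes w :: "nat \<Rightarrow> real"
  assumes dim: "dim_row A = n" "dim_row E = n + 2"
    and E: "\<And>x. quad_form E (n + 2) x = quad_form A n x + x n * (\<Sum>i<n. w i * x i) + x n * x (Suc n)"
  shows "large_pos_index E \<longleftrightarrow> large_pos_index A"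
proof
  assume "large_pos_index E"
  then obtain k where k: "n + 2 < 2 * k" "pos_index_ge (quad_form E (n + 2)) k"
    unfolding large_pos_index_def dim(2) by blast
  then obtain k' where k': "k = Suc k'" by (cases k) auto
  have "quad_form A n x = quad_form E (n + 2) x" if "x n = 0" for x
    using E[of x] that by simp
  with k(2) have "pos_index_ge (quad_form A n) k'"
    unfolding k' by (rule pos_index_ge_hyperplane[where m = n])
  then show "large_pos_index A" unfolding large_pos_index_def dim(1) using k(1) k' by auto
next
  assume "large_pos_index A"
  then obtain k where k: "n < 2 * k" "pos_index_ge (quad_form A n) k"
    unfolding large_pos_index_def dim(1) by blast
  have "pos_index_ge (quad_form E (n + 2)) (Suc k)" by (rule pos_index_ge_enlargement[OF E k(2)])
  then show "large_pos_index E"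
    unfolding large_pos_index_def dim(2) using k(1) by (auto intro!: exI[of _ "Suc k"])
qed

lemma sum_lessThan_add_2: "(\<Sum>i<n + 2. f i) = (\<Sum>i<n. f i) + f n + f (Suc n)"
  by (simp add: numeral_2_eq_2)

lemma quad_form_enlarge1:
  assumes "A \<in> carrier_mat n n"
  shows "quad_form (enlarge1 A xi) (n + 2) x
    = quad_form A n x + x n * (\<Sum>i<n. of_int (xi i) * x i) + x n * x (Suc n)"
proof -
  have entry: "enlarge1 A xi $$ (i,j) = (if i < n \<and> j < n then A $$ (i,j) else if i < n \<and> j = n then xi i
      else if i = n + 1 \<and> j = n then 1 else 0)" if "i < n + 2" "j < n + 2" for i j
    using that assms unfolding enlarge1_def Let_def by simp
  show ?thesis unfolding bilin_def sum_lessThan_add_2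
    by (simp add: entry sum.distrib sum_distrib_left sum_distrib_right algebra_simps)
qed

lemma quad_form_enlarge2:
  assumes "A \<in> carrier_mat n n"
  shows "quad_form (enlarge2 A xi) (n + 2) x
    = quad_form A n x + x n * (\<Sum>i<n. of_int (xi i) * x i) + x n * x (Suc n)"
proof -
  have entry: "enlarge2 A xi $$ (i,j) = (if i < n \<and> j < n then A $$ (i,j) else if i = n \<and> j < n then xi j
      else if i = n \<and> j = n + 1 then 1 else 0)" if "i < n + 2" "j < n + 2" for i j
    using that assms unfolding enlarge2_def Let_def by simp
  show ?thesis unfolding bilin_def sum_lessThan_add_2
    by (simp add: entry sum.distrib sum_distrib_left sum_distrib_right algebra_simps)
qed

text \<open>A unimodular integer matrix has the integer inverse det P \<cdot> adj P.\<close>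
lemma int_congruent_sym:
  assumes "int_congruent A B"
  shows "int_congruent B A"
proof -
  from assms obtain n P where A: "A \<in> carrier_mat n n" and P: "P \<in> carrier_mat n n"
    and det_P: "\<bar>det P\<bar> = 1" and B: "B = P * A * transpose_mat P"
    unfolding int_congruent_def by blast
  define Q where "Q = det P \<cdot>\<^sub>m adj_mat P"
  have Q: "Q \<in> carrier_mat n n" unfolding Q_def using adj_mat(1)[OF P] by simp
  have "det P * det P = 1" using det_P by (metis abs_mult_self_eq mult.right_neutral)
  then have QP: "Q * P = 1\<^sub>m n"
    unfolding Q_def using adj_mat[OF P] P by (auto simp: mult_smult_assoc_mat mult.assoc[symmetric])
  then have PQ: "transpose_mat P * transpose_mat Q = 1\<^sub>m n"
    using transpose_mult[OF Q P] by simp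
  have "Q * B * transpose_mat Q = (Q * P) * A * (transpose_mat P * transpose_mat Q)"
    unfolding B using A P Q by (simp add: assoc_mult_mat[of _ n n _ n _ n])
  also have "\<dots> = A" unfolding QP PQ using A by simp
  finally have "A = Q * B * transpose_mat Q" ..
  moreover have "det Q * det P = 1" using det_mult[OF Q P] QP by simp
  then have "\<bar>det Q\<bar> = 1" using det_P by (metis abs_1 abs_mult mult.right_neutral)
  moreover have "B \<in> carrier_mat n n" using B A P by simp
  ultimately show ?thesis unfolding int_congruent_def using Q by blast
qed

lemma large_pos_index_congruent:
  assumes "int_congruent A B" "large_pos_index B"
  shows "large_pos_index A"
proof -
  from assms(1) obtain n P where A: "A \<in> carrier_mat n n" and P: "P \<in> carrier_mat n n"
    and B: "B = P * A * transpose_mat P"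
    unfolding int_congruent_def by blast
  have dim: "dim_row B = n" "dim_row A = n" using A P B by auto
  from assms(2) obtain k where "n < 2 * k" "pos_index_ge (quad_form B n) k"
    unfolding large_pos_index_def dim by auto
  with pos_index_ge_congruence[OF A P] show ?thesis
    unfolding large_pos_index_def dim B by auto
qed

lemma large_pos_index_S_equiv: "S_equiv A B \<Longrightarrow> large_pos_index A \<longleftrightarrow> large_pos_index B"
proof (induction rule: S_equiv.induct)
  case (congr A B)
  then show ?case using large_pos_index_congruent int_congruent_sym by blast
next
  case (enl1 A n xi)
  then have "dim_row A = n" "dim_row (enlarge1 A xi) = n + 2" by (simp_all add: enlarge1_def)
  from large_pos_index_enlargement_iff[OF this quad_form_enlarge1[OF enl1]] show ?case ..
next
  case (enl2 A n xi)
  then have "dim_row A = n" "dim_row (enlarge2 A xi) = n + 2" by (simp_all add: enlarge2_def)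
  from large_pos_index_enlargement_iff[OF this quad_form_enlarge2[OF enl2]] show ?case ..
qed auto

text \<open>The first g coordinates span an isotropic subspace, and a subspace on which the form
  is positive definite meets it trivially.\<close>
lemma metabolic_not_large_pos_index:
  assumes "metabolic_form M"
  shows "\<not> large_pos_index M"
proof
  assume "large_pos_index M"
  from assms obtain g B C D where BCD: "B \<in> carrier_mat g g" "C \<in> carrier_mat g g" "D \<in> carrier_mat g g"
    and M: "M = four_block_mat (0\<^sub>m g g) B C D"
    unfolding metabolic_form_def by blast
  have dim: "dim_row M = 2 * g" using M BCD by simp
  from \<open>large_pos_index M\<close> obtain k v J where "2 * g < 2 * k" "finite J" "card J = k"
    and pos: "\<And>c. (\<exists>j\<in>J. c j \<noteq> 0) \<Longrightarrow> quad_form M (2 * g) (lincomb v J c) > 0"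
    unfolding large_pos_index_def pos_index_ge_def dim by blast
  then obtain c where c: "\<exists>j\<in>J. c j \<noteq> 0" "\<forall>i\<in>{g..<2 * g}. (\<Sum>j\<in>J. v j i * c j) = 0"
    using homogeneous_system_nontrivial_solution[of "{g..<2 * g}" J "\<lambda>i j. v j i"] by auto
  have x0: "lincomb v J c i = 0" if "g \<le> i" "i < 2 * g" for i
    using c(2) that unfolding lincomb_def by (auto simp: mult.commute)
  have M0: "M $$ (i, j) = 0" if "i < g" "j < g" for i j
    using that M BCD by simp
  have "quad_form M (2 * g) (lincomb v J c) = 0"
    unfolding bilin_def
  proof (intro sum.neutral ballI)
    fix i j assume "i \<in> {..<2 * g}" "j \<in> {..<2 * g}"
    then show "of_int (M $$ (i, j)) * lincomb v J c i * lincomb v J c j = 0"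
      using x0[of i] x0[of j] M0[of i j] by (cases "i < g"; cases "j < g") auto
  qed
  with pos[OF c(1)] show False by simp
qed

section \<open>Signatures of Hermitian matrices\<close>

definition count_real_roots :: "(real \<Rightarrow> bool) \<Rightarrow> complex poly \<Rightarrow> nat" where
  "count_real_roots P p = (\<Sum>x\<in>{x. poly p x = 0 \<and> Im x = 0 \<and> P (Re x)}. order x p)"

lemma herm_signature_count_real_roots:
  "herm_signature H
    = int (count_real_roots (\<lambda>r. r > 0) (char_poly H)) - int (count_real_roots (\<lambda>r. r < 0) (char_poly H))"
  unfolding herm_signature_def count_real_roots_def by simp

lemma count_real_roots_mult:
  assumes p: "p \<noteq> 0" and q: "q \<noteq> 0"
  shows "count_real_roots P (p * q) = count_real_roots P p + count_real_roots P q"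
proof -
  let ?S = "\<lambda>p. {x. poly p x = 0 \<and> Im x = 0 \<and> P (Re x)}"
  have pq: "p * q \<noteq> 0" using p q by simp
  have fin: "finite (?S (p * q))"
    by (rule finite_subset[OF _ poly_roots_finite[OF pq]]) auto
  have "count_real_roots P (p * q) = (\<Sum>x\<in>?S (p * q). order x p) + (\<Sum>x\<in>?S (p * q). order x q)"
    unfolding count_real_roots_def order_mult[OF pq] by (rule sum.distrib)
  also have "(\<Sum>x\<in>?S (p * q). order x p) = (\<Sum>x\<in>?S p. order x p)"
    by (rule sum.mono_neutral_right[OF fin]) (use p in \<open>auto simp: order_root\<close>)
  also have "(\<Sum>x\<in>?S (p * q). order x q) = (\<Sum>x\<in>?S q. order x q)"
    by (rule sum.mono_neutral_right[OF fin]) (use q in \<open>auto simp: order_root\<close>)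
  finally show ?thesis unfolding count_real_roots_def .
qed

lemma count_real_roots_linear:
  "count_real_roots P [:- complex_of_real r, 1:] = (if P r then 1 else 0)"
proof -
  have "{x. poly [:- complex_of_real r, 1:] x = 0 \<and> Im x = 0 \<and> P (Re x)}
      = (if P r then {complex_of_real r} else {})"
    by auto
  moreover have "order (complex_of_real r) [:- complex_of_real r, 1:] = 1"
    using order_power_n_n[of "complex_of_real r" 1] by simp
  ultimately show ?thesis unfolding count_real_roots_def by simp
qed

lemma herm_signature_linear_factors:
  assumes "char_poly H = [:- complex_of_real l1, 1:] * [:- complex_of_real l2, 1:]"
  shows "real_of_int (herm_signature H) = sgn l1 + sgn l2"
proof -
  have nz: "[:- complex_of_real l, 1:] \<noteq> 0" for l by simp
  show ?thesis
    unfolding herm_signature_count_real_roots assms count_real_roots_mult[OF nz nz]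
      count_real_roots_linear
    by (auto simp: sgn_if)
qed

lemma sgn_add_sgn:
  fixes l1 l2 :: real
  shows "sgn l1 + sgn l2
    = (if l1 * l2 > 0 then 2 * sgn (l1 + l2) else if l1 * l2 < 0 then 0 else sgn (l1 + l2))"
  by (auto simp: sgn_if zero_less_mult_iff mult_less_0_iff)

lemma quadratic_real_factors:
  fixes d s :: real
  assumes "4 * d \<le> s\<^sup>2"
  obtains l1 l2 where "l1 * l2 = d" "l1 + l2 = s"
    "[:complex_of_real d, - complex_of_real s, 1:] = [:- complex_of_real l1, 1:] * [:- complex_of_real l2, 1:]"
proof
  define r where "r = sqrt (s\<^sup>2 - 4 * d)"
  have "r\<^sup>2 = s\<^sup>2 - 4 * d" using assms unfolding r_def by simp
  then show d: "(s + r) / 2 * ((s - r) / 2) = d" by (simp add: field_simps power2_eq_square)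
  show s: "(s + r) / 2 + (s - r) / 2 = s" by (simp add: field_simps)
  have prod: "[:- complex_of_real l1, 1:] * [:- complex_of_real l2, 1:]
      = [:complex_of_real (l1 * l2), - complex_of_real (l1 + l2), 1:]" for l1 l2
    by (simp add: mult_pCons_left mult_pCons_right algebra_simps)
  show "[:complex_of_real d, - complex_of_real s, 1:]
      = [:- complex_of_real ((s + r) / 2), 1:] * [:- complex_of_real ((s - r) / 2), 1:]"
    by (simp only: prod d s)
qed

lemma herm_signature_quadratic_char_poly:
  fixes d s :: real
  assumes "char_poly H = [:complex_of_real d, - complex_of_real s, 1:]" and "4 * d \<le> s\<^sup>2"
  shows "real_of_int (herm_signature H) = (if d > 0 then 2 * sgn s else if d < 0 then 0 else sgn s)"
proof -
  obtain l1 l2 where "l1 * l2 = d" "l1 + l2 = s"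
    "char_poly H = [:- complex_of_real l1, 1:] * [:- complex_of_real l2, 1:]"
    using quadratic_real_factors[OF assms(2)] assms(1) by metis
  then show ?thesis using herm_signature_linear_factors sgn_add_sgn[of l1 l2] by simp
qed

lemma char_poly_four_block_diag:
  fixes X :: "'a :: idom mat"
  assumes X: "X \<in> carrier_mat n1 n1" and Y: "Y \<in> carrier_mat n2 n2"
  shows "char_poly (four_block_mat X (0\<^sub>m n1 n2) (0\<^sub>m n2 n1) Y) = char_poly X * char_poly Y"
proof -
  have "char_poly_matrix (four_block_mat X (0\<^sub>m n1 n2) (0\<^sub>m n2 n1) Y)
     = four_block_mat (char_poly_matrix X) (0\<^sub>m n1 n2) (0\<^sub>m n2 n1) (char_poly_matrix Y)"
    by (rule eq_matI) (use X Y in \<open>auto simp: char_poly_matrix_def\<close>)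
  then show ?thesis
    unfolding char_poly_def using X Y
    by (simp add: det_four_block_mat_lower_left_zero[of _ n1 _ n2])
qed

lemma herm_signature_four_block_diag:
  fixes X :: "complex mat"
  assumes X: "X \<in> carrier_mat n1 n1" and Y: "Y \<in> carrier_mat n2 n2"
  shows "herm_signature (four_block_mat X (0\<^sub>m n1 n2) (0\<^sub>m n2 n1) Y) = herm_signature X + herm_signature Y"
proof -
  have "char_poly X \<noteq> 0" "char_poly Y \<noteq> 0"
    using degree_monic_char_poly[OF X] degree_monic_char_poly[OF Y] by auto
  then show ?thesis
    unfolding herm_signature_count_real_roots char_poly_four_block_diag[OF X Y]
    by (simp add: count_real_roots_mult)
qed

lemma det_2x2:
  assumes "X \<in> carrier_mat 2 2"
  shows "det X = X $$ (0,0) * X $$ (1,1) - X $$ (0,1) * X $$ (1,0)"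
proof -
  have "det X = (\<Sum>i<2. X $$ (i,0) * cofactor X i 0)"
    by (rule laplace_expansion_column[OF assms]) simp
  also have "\<dots> = X $$ (0,0) * X $$ (1,1) - X $$ (0,1) * X $$ (1,0)"
    using assms
    by (simp add: cofactor_def det_single mat_delete_def numeral_2_eq_2 lessThan_Suc)
  finally show ?thesis .
qed

lemma char_poly_2x2:
  assumes "X \<in> carrier_mat 2 2"
  shows "char_poly X = [:X $$ (0,0) * X $$ (1,1) - X $$ (0,1) * X $$ (1,0), - (X $$ (0,0) + X $$ (1,1)), 1:]"
  unfolding char_poly_def det_2x2[OF char_poly_matrix_closed[OF assms]]
  using assms by (simp add: char_poly_matrix_def mult_pCons_left mult_pCons_right algebra_simps)

section \<open>Levine-Tristram signatures of genus one matrices\<close>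

definition lt_matrix :: "int mat \<Rightarrow> complex \<Rightarrow> complex mat" where
  "lt_matrix A z = (1 - z) \<cdot>\<^sub>m map_mat of_int A + (1 - cnj z) \<cdot>\<^sub>m map_mat of_int (transpose_mat A)"

lemma lt_signature_lt_matrix: "lt_signature A z = herm_signature (lt_matrix A z)"
  unfolding lt_signature_def lt_matrix_def ..

lemma lt_matrix_carrier [simp]: "A \<in> carrier_mat n n \<Longrightarrow> lt_matrix A z \<in> carrier_mat n n"
  unfolding lt_matrix_def by auto

lemma lt_signature_block_sum:
  assumes X: "X \<in> carrier_mat n1 n1" and Y: "Y \<in> carrier_mat n2 n2"
  shows "lt_signature (block_sum X Y) z = lt_signature X z + lt_signature Y z"
proof -
  have "lt_matrix (block_sum X Y) z = four_block_mat (lt_matrix X z) (0\<^sub>m n1 n2) (0\<^sub>m n2 n1) (lt_matrix Y z)"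
    by (rule eq_matI) (use X Y in \<open>auto simp: lt_matrix_def block_sum_def\<close>)
  then show ?thesis
    unfolding lt_signature_lt_matrix
    by (simp add: herm_signature_four_block_diag[OF lt_matrix_carrier[OF X] lt_matrix_carrier[OF Y]])
qed

lemma lt_signature_empty: "lt_signature (0\<^sub>m 0 0) z = 0"
proof -
  have "char_poly (lt_matrix (0\<^sub>m 0 0) z) = 1"
    unfolding char_poly_def by (simp add: lt_matrix_def char_poly_matrix_def)
  then show ?thesis unfolding lt_signature_lt_matrix herm_signature_def by simp
qed

definition genus_one_mat :: "int \<Rightarrow> int \<Rightarrow> int mat" where
  "genus_one_mat a c = mat 2 2 (\<lambda>(i,j). if i = 0 \<and> j = 0 then a else if i = 0 \<and> j = 1 then 1
                              else if i = 1 \<and> j = 1 then c else 0)"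

lemma genus_one_mat_carrier [simp]: "genus_one_mat a c \<in> carrier_mat 2 2"
  unfolding genus_one_mat_def by simp

lemma char_poly_lt_matrix_genus_one:
  fixes a c :: int and t :: real
  defines "e \<equiv> 2 - 2 * cos t"
  shows "char_poly (lt_matrix (genus_one_mat a c) (cis t))
    = [:complex_of_real (e * (real_of_int (a * c) * e - 1)), - complex_of_real (e * real_of_int (a + c)), 1:]"
proof -
  have "(1 - cis t) * (1 - cnj (cis t)) = complex_of_real e"
    unfolding e_def using sin_cos_squared_add[of t] by (simp add: complex_eq_iff algebra_simps power2_eq_square)
  moreover have "(1 - cis t) * of_int k + (1 - cnj (cis t)) * of_int k = complex_of_real (e * k)" for k
    unfolding e_def by (simp add: complex_eq_iff algebra_simps)
  ultimately show ?thesis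
    unfolding char_poly_2x2[OF lt_matrix_carrier[OF genus_one_mat_carrier]]
    by (simp add: lt_matrix_def genus_one_mat_def algebra_simps)
qed

lemma lt_signature_genus_one:
  fixes a c :: int
  assumes ac: "a * c > 0" and ne: "real_of_int (a * c) * (2 - 2 * cos t) \<noteq> 1"
  shows "real_of_int (lt_signature (genus_one_mat a c) (cis t))
    = (if real_of_int (a * c) * (2 - 2 * cos t) > 1 then 2 * sgn (real_of_int a) else 0)"
proof -
  define e where "e = 2 - 2 * cos t"
  define p where "p = real_of_int (a * c)"
  have e: "e \<ge> 0" unfolding e_def using cos_le_one[of t] by linarith
  have p: "p > 0" unfolding p_def using ac by (simp only: of_int_0_less_iff)
  have "(e * real_of_int (a + c))\<^sup>2 - 4 * (e * (p * e - 1)) = (e * real_of_int (a - c))\<^sup>2 + 4 * e"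
    unfolding p_def by (simp add: power2_eq_square algebra_simps)
  then have "4 * (e * (p * e - 1)) \<le> (e * real_of_int (a + c))\<^sup>2"
    using e zero_le_power2[of "e * real_of_int (a - c)"] by linarith
  from herm_signature_quadratic_char_poly[OF char_poly_lt_matrix_genus_one[of a c t, folded e_def p_def] this]
  have sig: "real_of_int (lt_signature (genus_one_mat a c) (cis t))
      = (if e * (p * e - 1) > 0 then 2 * sgn (e * real_of_int (a + c))
         else if e * (p * e - 1) < 0 then 0 else sgn (e * real_of_int (a + c)))"
    unfolding lt_signature_lt_matrix .
  have sgn_sum: "sgn (real_of_int (a + c)) = sgn (real_of_int a)"
    using ac by (auto simp: zero_less_mult_iff sgn_if)
  show ?thesis
  proof (cases "p * e > 1")
    case True
    with p e have "e > 0" by (cases "e = 0") auto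
    with True show ?thesis
      using sig sgn_sum unfolding e_def[symmetric] p_def[symmetric] by (simp add: sgn_mult)
  next
    case False
    with ne have "p * e < 1" unfolding p_def e_def by simp
    then have "e * (p * e - 1) \<le> 0" and "e * (p * e - 1) = 0 \<Longrightarrow> e = 0"
      using e by (auto simp: mult_nonneg_nonpos)
    then show ?thesis
      using sig False unfolding e_def[symmetric] p_def[symmetric] by auto
  qed
qed

lemma cos_less_cos_iff_mem_arc:
  fixes t th :: real
  assumes t: "0 \<le> t" "t \<le> 2 * pi" and th: "0 \<le> th" "th \<le> pi" and nt: "t \<noteq> th" "t \<noteq> 2 * pi - th"
  shows "cos t \<noteq> cos th" and "cos t < cos th \<longleftrightarrow> t \<in> {th..2 * pi - th}"
proof -
  have "cos t \<noteq> cos th \<and> (cos t < cos th \<longleftrightarrow> t \<in> {th..2 * pi - th})"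
  proof (cases "t \<le> pi")
    case True
    have "cos t \<noteq> cos th" using cos_inj_pi[OF t(1) True th] nt by auto
    moreover have "cos t < cos th \<longleftrightarrow> th < t" using cos_mono_less_eq[OF t(1) True th] .
    ultimately show ?thesis using True th nt by auto
  next
    case False
    define t' where "t' = 2 * pi - t"
    have t': "0 \<le> t'" "t' \<le> pi" using False t unfolding t'_def by auto
    have cos_t: "cos t = cos t'" unfolding t'_def by simp
    have "cos t \<noteq> cos th" using cos_inj_pi[OF t' th] nt unfolding cos_t t'_def by auto
    moreover have "cos t < cos th \<longleftrightarrow> th < t'" unfolding cos_t using cos_mono_less_eq[OF t' th] .
    ultimately show ?thesis using False th nt unfolding t'_def by auto
  qed
  then show "cos t \<noteq> cos th" and "cos t < cos th \<longleftrightarrow> t \<in> {th..2 * pi - th}" by auto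
qed

lemma has_integral_cos_threshold:
  fixes g :: "real \<Rightarrow> real"
  assumes th: "0 \<le> th" "th \<le> pi"
    and g: "\<And>t. t \<in> {0..2 * pi} \<Longrightarrow> cos t \<noteq> cos th \<Longrightarrow> g t = (if cos t < cos th then C else 0)"
  shows "(g has_integral C * (2 * pi - 2 * th)) {0..2 * pi}"
proof -
  have "((\<lambda>x. C) has_integral C * (2 * pi - 2 * th)) (cbox th (2 * pi - th))"
    using has_integral_const_real[of C th "2 * pi - th"] th by (simp add: algebra_simps)
  then have "((\<lambda>x. if x \<in> cbox th (2 * pi - th) then C else 0) has_integral C * (2 * pi - 2 * th)) (cbox 0 (2 * pi))"
    by (rule has_integral_restrict_closed_subinterval) (use th in auto)
  then have i: "((\<lambda>x. if x \<in> {th..2 * pi - th} then C else 0) has_integral C * (2 * pi - 2 * th)) {0..2 * pi}"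
    by simp
  show ?thesis
  proof (rule has_integral_spike_finite[OF _ _ i])
    show "finite {th, 2 * pi - th}" by simp
    fix t assume "t \<in> {0..2 * pi} - {th, 2 * pi - th}"
    then have t: "0 \<le> t" "t \<le> 2 * pi" "t \<noteq> th" "t \<noteq> 2 * pi - th" by auto
    show "g t = (if t \<in> {th..2 * pi - th} then C else 0)"
      using g[of t] cos_less_cos_iff_mem_arc[OF t(1,2) th t(3,4)] t by auto
  qed
qed

text \<open>The signature jumps where the hermitian form degenerates, i.e. where
  a c |1 - z|^2 = 1, which on the unit circle means cos t = 1 - 1 / (2 a c).\<close>
lemma has_integral_lt_signature_genus_one:
  fixes a c :: int
  assumes ac: "a * c > 0"
  defines "th \<equiv> arccos (1 - 1 / (2 * real_of_int (a * c)))"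
  shows "((\<lambda>t. real_of_int (lt_signature (genus_one_mat a c) (cis t)))
    has_integral 2 * sgn (real_of_int a) * (2 * pi - 2 * th)) {0..2 * pi}"
proof -
  define p where "p = real_of_int (a * c)"
  have "p \<ge> 1" using ac unfolding p_def by linarith
  then have bounds: "-1 \<le> 1 - 1 / (2 * p)" "1 - 1 / (2 * p) \<le> 1" by (auto simp: field_simps)
  then have cos_th: "cos th = 1 - 1 / (2 * p)" unfolding th_def p_def by simp
  show ?thesis
  proof (rule has_integral_cos_threshold)
    show "0 \<le> th" "th \<le> pi" unfolding th_def p_def[symmetric] using bounds by (auto intro: arccos_lbound arccos_ubound)
    fix t assume "t \<in> {0..2 * pi}" "cos t \<noteq> cos th"
    then have "p * (2 - 2 * cos t) \<noteq> 1" and "p * (2 - 2 * cos t) > 1 \<longleftrightarrow> cos t < cos th"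
      using \<open>p \<ge> 1\<close> unfolding cos_th by (auto simp: field_simps)
    then show "real_of_int (lt_signature (genus_one_mat a c) (cis t))
        = (if cos t < cos th then 2 * sgn (real_of_int a) else 0)"
      using lt_signature_genus_one[OF ac, of t] unfolding p_def by simp
  qed
qed

lemma arccos_31_32: "arccos (31 / 32) = pi - 4 * arccos (3 / 4)"
proof -
  define th where "th = arccos (3 / 4)"
  have th0: "0 \<le> th" unfolding th_def by (rule arccos_lbound) auto
  have "sqrt 2 \<le> 3 / 2"
    by (rule real_le_lsqrt) (auto simp: power2_eq_square)
  then have "cos (pi / 4) \<le> cos th" unfolding th_def cos_45 by simp
  then have th1: "th \<le> pi / 4"
    using cos_mono_le_eq[of "pi / 4" th] th0 arccos_ubound[of "3 / 4"] unfolding th_def by auto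
  have cos_2th: "cos (2 * th) = 1 / 8" unfolding cos_double_cos th_def by (simp add: power2_eq_square)
  have "cos (4 * th) = cos (2 * (2 * th))" by simp
  also have "\<dots> = - 31 / 32" unfolding cos_double_cos[of "2 * th"] cos_2th by (simp add: power2_eq_square)
  finally have "cos (pi - 4 * th) = 31 / 32" by simp
  then have "arccos (31 / 32) = arccos (cos (pi - 4 * th))" by (simp only:)
  also have "\<dots> = pi - 4 * th" by (rule arccos_cos) (use th0 th1 in auto)
  finally show ?thesis unfolding th_def .
qed

section \<open>Block diagonal matrices\<close>

lemma diag_block_mat_Cons [simp]: "diag_block_mat (A # As) = block_sum A (diag_block_mat As)"
  by (simp add: block_sum_def Let_def)

declare diag_block_mat.simps(2) [simp del]

lemma mfold_sum_eq_diag_block_mat: "mfold_sum m A = diag_block_mat (replicate m A)"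
  by (induction m) simp_all

lemma square_mat_carrier: "square_mat A \<Longrightarrow> A \<in> carrier_mat (dim_row A) (dim_row A)"
  by (rule carrier_matI) simp_all

lemma diag_block_mat_carrier:
  assumes "Ball (set As) square_mat"
  shows "diag_block_mat As \<in> carrier_mat (sum_list (map dim_row As)) (sum_list (map dim_row As))"
  using square_mat_carrier[OF diag_block_mat_square[OF assms]] by (simp add: dim_diag_block_mat(1))

lemma lt_signature_diag_block_mat:
  "Ball (set As) square_mat \<Longrightarrow> lt_signature (diag_block_mat As) z = (\<Sum>A\<leftarrow>As. lt_signature A z)"
proof (induction As)
  case (Cons A As)
  then show ?case
    by (simp add: lt_signature_block_sum[OF square_mat_carrier diag_block_mat_carrier])
qed (simp add: lt_signature_empty)

lemma det_block_sum:
  assumes "X \<in> carrier_mat n1 n1" "Y \<in> carrier_mat n2 n2"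
  shows "det (block_sum X Y) = det X * det Y"
  using assms unfolding block_sum_def by (intro det_four_block_mat_lower_left_zero) auto

lemma det_diag_block_mat: "Ball (set (As :: int mat list)) square_mat \<Longrightarrow> det (diag_block_mat As) = (\<Prod>A\<leftarrow>As. det A)"
proof (induction As)
  case (Cons A As)
  then show ?case
    by (simp add: det_block_sum[OF square_mat_carrier diag_block_mat_carrier])
qed (simp add: det_dim_zero)

lemma block_sum_add_transpose:
  assumes "X \<in> carrier_mat n1 n1" "Y \<in> carrier_mat n2 n2"
  shows "block_sum X Y + transpose_mat (block_sum X Y) = block_sum (X + transpose_mat X) (Y + transpose_mat Y)"
  by (rule eq_matI) (use assms in \<open>auto simp: block_sum_def\<close>)

lemma block_sum_diff_transpose:
  assumes "X \<in> carrier_mat n1 n1" "Y \<in> carrier_mat n2 n2"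
  shows "block_sum X Y - transpose_mat (block_sum X Y) = block_sum (X - transpose_mat X) (Y - transpose_mat Y)"
  by (rule eq_matI) (use assms in \<open>auto simp: block_sum_def\<close>)

lemma diag_block_mat_add_transpose:
  "Ball (set (As :: int mat list)) square_mat \<Longrightarrow>
    diag_block_mat As + transpose_mat (diag_block_mat As) = diag_block_mat (map (\<lambda>A. A + transpose_mat A) As)"
proof (induction As)
  case (Cons A As)
  then show ?case
    by (simp add: block_sum_add_transpose[OF square_mat_carrier diag_block_mat_carrier])
qed simp

lemma diag_block_mat_diff_transpose:
  "Ball (set (As :: int mat list)) square_mat \<Longrightarrow>
    diag_block_mat As - transpose_mat (diag_block_mat As) = diag_block_mat (map (\<lambda>A. A - transpose_mat A) As)"
proof (induction As)
  case (Cons A As)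
  then show ?case
    by (simp add: block_sum_diff_transpose[OF square_mat_carrier diag_block_mat_carrier])
qed simp

lemma pos_index_ge_diag_block_mat:
  "list_all2 (\<lambda>A k. square_mat A \<and> pos_index_ge (quad_form A (dim_row A)) k) As ks \<Longrightarrow>
    pos_index_ge (quad_form (diag_block_mat As) (sum_list (map dim_row As))) (sum_list ks)"
proof (induction As arbitrary: ks)
  case (Cons A As)
  from Cons.prems obtain k ks' where ks: "ks = k # ks'" and A: "square_mat A" "pos_index_ge (quad_form A (dim_row A)) k"
    and rest: "list_all2 (\<lambda>A k. square_mat A \<and> pos_index_ge (quad_form A (dim_row A)) k) As ks'"
    by (cases ks) auto
  have "Ball (set As) square_mat" using rest by (auto simp: list_all2_conv_all_nth in_set_conv_nth)
  then show ?case
    using pos_index_ge_block_sum[OF square_mat_carrier[OF A(1)] diag_block_mat_carrier A(2) Cons.IH[OF rest]] ks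
    by simp
qed simp

section \<open>The example\<close>

lemma pos_index_ge_genus_one_1_1: "pos_index_ge (quad_form (genus_one_mat 1 1) 2) 2"
proof (rule pos_index_ge_positive_definite)
  fix x :: "nat \<Rightarrow> real" assume "\<exists>i<2. x i \<noteq> 0"
  then have "(x 0)\<^sup>2 + (x 1)\<^sup>2 > 0" by (auto simp: less_2_cases_iff sum_power2_gt_zero_iff)
  moreover have "quad_form (genus_one_mat 1 1) 2 x = ((x 0)\<^sup>2 + (x 1)\<^sup>2 + (x 0 + x 1)\<^sup>2) / 2"
    unfolding bilin_def genus_one_mat_def
    by (simp add: numeral_2_eq_2 lessThan_Suc power2_eq_square field_simps)
  moreover have "(x 0)\<^sup>2 + (x 1)\<^sup>2 + (x 0 + x 1)\<^sup>2 > 0"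
    using \<open>(x 0)\<^sup>2 + (x 1)\<^sup>2 > 0\<close> by (simp add: add_pos_nonneg)
  ultimately show "quad_form (genus_one_mat 1 1) 2 x > 0" by simp
qed

definition example_blocks :: "int mat list" where
  "example_blocks = replicate 6 (genus_one_mat 1 1) @ replicate 4 (genus_one_mat (-1) (-2))
     @ [genus_one_mat (-1) (-16)]"

definition example_seifert :: "int mat" where
  "example_seifert = diag_block_mat example_blocks"

lemma example_blocks_square: "Ball (set example_blocks) square_mat"
  unfolding example_blocks_def by (auto simp: genus_one_mat_def)

lemma example_seifert_carrier: "example_seifert \<in> carrier_mat 22 22"
  using diag_block_mat_carrier[OF example_blocks_square]
  unfolding example_seifert_def example_blocks_def by (simp add: genus_one_mat_def sum_list_replicate)

lemma example_seifert_matrix: "seifert_matrix example_seifert"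
proof -
  have "det (genus_one_mat a c - transpose_mat (genus_one_mat a c)) = 1" for a c
    by (subst det_2x2) (auto simp: genus_one_mat_def)
  then have "det (example_seifert - transpose_mat example_seifert) = 1"
    unfolding example_seifert_def diag_block_mat_diff_transpose[OF example_blocks_square]
    using example_blocks_square
    by (subst det_diag_block_mat) (auto simp: example_blocks_def genus_one_mat_def)
  then show ?thesis
    unfolding seifert_matrix_def using example_seifert_carrier by auto
qed

lemma example_arf_zero: "arf_zero example_seifert"
proof -
  have "det (genus_one_mat a c + transpose_mat (genus_one_mat a c)) = 4 * a * c - 1" for a c
    by (subst det_2x2) (auto simp: genus_one_mat_def)
  then show ?thesis
    unfolding arf_zero_def example_seifert_def diag_block_mat_add_transpose[OF example_blocks_square]
    using example_blocks_square
    by (subst det_diag_block_mat) (auto simp: example_blocks_def genus_one_mat_def)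
qed

text \<open>The thresholds are arccos (1/2) = pi/3, arccos (3/4) and arccos (31/32); the three
  contributions cancel by the identity arccos (31/32) = pi - 4 arccos (3/4).\<close>
lemma example_abelian_eta: "abelian_eta example_seifert = 0"
proof -
  have "lt_signature example_seifert z = 6 * lt_signature (genus_one_mat 1 1) z
      + 4 * lt_signature (genus_one_mat (-1) (-2)) z + lt_signature (genus_one_mat (-1) (-16)) z" for z
    unfolding example_seifert_def lt_signature_diag_block_mat[OF example_blocks_square]
    by (simp add: example_blocks_def sum_list_replicate)
  moreover have "((\<lambda>t. 6 * real_of_int (lt_signature (genus_one_mat 1 1) (cis t))
      + 4 * real_of_int (lt_signature (genus_one_mat (-1) (-2)) (cis t))
      + real_of_int (lt_signature (genus_one_mat (-1) (-16)) (cis t))) has_integral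
      6 * (2 * (2 * pi - 2 * arccos (1 / 2))) + 4 * (- 2 * (2 * pi - 2 * arccos (3 / 4)))
      + - 2 * (2 * pi - 2 * arccos (31 / 32))) {0..2 * pi}"
    using has_integral_lt_signature_genus_one[of 1 1] has_integral_lt_signature_genus_one[of "-1" "-2"]
      has_integral_lt_signature_genus_one[of "-1" "-16"]
    by (intro has_integral_add has_integral_mult_right) simp_all
  ultimately have "((\<lambda>t. real_of_int (lt_signature example_seifert (cis t))) has_integral 0) {0..2 * pi}"
    unfolding arccos_one_half arccos_31_32 by (simp add: algebra_simps)
  then show ?thesis unfolding abelian_eta_def by (simp add: integral_unique)
qed

lemma example_pos_index: "pos_index_ge (quad_form example_seifert 22) 12"
proof -
  have "list_all2 (\<lambda>X k. square_mat X \<and> pos_index_ge (quad_form X (dim_row X)) k)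
      example_blocks (replicate 6 2 @ replicate 5 0)"
    using pos_index_ge_genus_one_1_1
    by (simp add: example_blocks_def numeral_eq_Suc genus_one_mat_def)
  from pos_index_ge_diag_block_mat[OF this] show ?thesis
    unfolding example_seifert_def by (simp add: example_blocks_def genus_one_mat_def sum_list_replicate)
qed

lemma example_not_alg_torsion: "\<not> alg_torsion example_seifert"
proof
  assume "alg_torsion example_seifert"
  then obtain m M where "m > 0" and S: "S_equiv (mfold_sum m example_seifert) M"
    and M: "metabolic_form M"
    unfolding alg_torsion_def alg_slice_def by blast
  have "list_all2 (\<lambda>X k. square_mat X \<and> pos_index_ge (quad_form X (dim_row X)) k)
      (replicate m example_seifert) (replicate m 12)"
    using example_pos_index example_seifert_carrier by (simp add: list_all2_conv_all_nth)
  from pos_index_ge_diag_block_mat[OF this]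
  have "pos_index_ge (quad_form (mfold_sum m example_seifert) (m * 22)) (m * 12)"
    using example_seifert_carrier by (simp add: mfold_sum_eq_diag_block_mat sum_list_replicate)
  moreover have "dim_row (mfold_sum m example_seifert) = m * 22"
    using example_seifert_carrier by (simp add: mfold_sum_eq_diag_block_mat dim_diag_block_mat sum_list_replicate)
  ultimately have "large_pos_index (mfold_sum m example_seifert)"
    unfolding large_pos_index_def using \<open>m > 0\<close> by (auto intro!: exI[of _ "m * 12"])
  with large_pos_index_S_equiv[OF S] metabolic_not_large_pos_index[OF M] show False by simp
qed

theorem proposition6p8:
  shows "\<exists>A :: int mat. seifert_matrix A \<and> arf_zero A \<and> abelian_eta A = 0 \<and> \<not> alg_torsion A"
  using example_seifert_matrix example_arf_zero example_abelian_eta example_not_alg_torsion by blast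

end
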